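(* Let $\mathcal Z=(Z_n)_{n\ge0}$ be an irreducible Markov chain on a finite state space $F$ with transition matrix $R$, and let $N\ge1$. There is a constant $\rho_N$, depending only on $R$ and $N$, such that the following holds for every initial distribution of $\mathcal Z$, all integers $0=k_1<k_2<\dots<k_N<\infty$ (with $k_{N+1}=\infty$), and every measurable $\Lambda:F^{\mathbb N_0}\to[0,\infty)$: if $(Z^i_n)_{k_i\le n\le k_{i+1}}$, $i=1,\dots,N$, are $N$ independent stationary Markov chains with transition matrix $R$, and $\tilde{\mathcal Z}=(\tilde Z_n)_{n\ge0}$ is defined by $\tilde Z_n=Z^i_n$ for $k_i\le n<k_{i+1}$, then $$\mathbb E(\Lambda(\mathcal Z))\le\rho_N\,\mathbb E(\Lambda(\tilde{\mathcal Z})).$$ *)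

theory Defs
  imports "HOL-Probability.Probability"
begin

definition path_space :: "(nat \<Rightarrow> 'a) measure" where
  "path_space = PiM UNIV (\<lambda>_. count_space UNIV)"

definition stochastic :: "('a::finite \<Rightarrow> 'a \<Rightarrow> real) \<Rightarrow> bool" where
  "stochastic R \<longleftrightarrow> (\<forall>x y. 0 \<le> R x y) \<and> (\<forall>x. (\<Sum>y\<in>UNIV. R x y) = 1)"

fun mpow :: "('a::finite \<Rightarrow> 'a \<Rightarrow> real) \<Rightarrow> nat \<Rightarrow> 'a \<Rightarrow> 'a \<Rightarrow> real" where
  "mpow R 0 x y = (if x = y then 1 else 0)"
| "mpow R (Suc n) x y = (\<Sum>z\<in>UNIV. mpow R n x z * R z y)"

definition irreducible_mc :: "('a::finite \<Rightarrow> 'a \<Rightarrow> real) \<Rightarrow> bool" where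
  "irreducible_mc R \<longleftrightarrow> (\<forall>x y. \<exists>n. mpow R n x y > 0)"

definition prob_dist :: "('a::finite \<Rightarrow> real) \<Rightarrow> bool" where
  "prob_dist \<mu> \<longleftrightarrow> (\<forall>x. 0 \<le> \<mu> x) \<and> (\<Sum>x\<in>UNIV. \<mu> x) = 1"

definition stationary_dist :: "('a::finite \<Rightarrow> 'a \<Rightarrow> real) \<Rightarrow> ('a \<Rightarrow> real) \<Rightarrow> bool" where
  "stationary_dist R \<pi> \<longleftrightarrow> prob_dist \<pi> \<and> (\<forall>y. (\<Sum>x\<in>UNIV. \<pi> x * R x y) = \<pi> y)"

definition markov_law :: "('a::finite \<Rightarrow> 'a \<Rightarrow> real) \<Rightarrow> ('a \<Rightarrow> real) \<Rightarrow> (nat \<Rightarrow> 'a) measure \<Rightarrow> bool" where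
  "markov_law R \<mu> P \<longleftrightarrow> prob_space P \<and> sets P = sets path_space \<and>
     (\<forall>n xs. length xs = Suc n \<longrightarrow>
        measure P {\<omega>. \<forall>i\<le>n. \<omega> i = xs ! i} = \<mu> (xs ! 0) * (\<Prod>i<n. R (xs ! i) (xs ! Suc i)))"

text \<open>Block index of time n for block start times k 0 < ... < k (N-1): the (0-based)
  index i < N with k i \<le> n < k (i+1) (with k N = infinity).\<close>
definition blk :: "(nat \<Rightarrow> nat) \<Rightarrow> nat \<Rightarrow> nat \<Rightarrow> nat" where
  "blk k N n = Max {i. i < N \<and> k i \<le> n}"

text \<open>Law of the glued process: N independent copies of a chain with law W (the i-th copy
  started at time k i, i.e. Z^i_n = W^i_{n - k i}), and tilde Z_n = Z^i_n on block i.\<close>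
definition glued_law :: "nat \<Rightarrow> (nat \<Rightarrow> nat) \<Rightarrow> (nat \<Rightarrow> 'a) measure \<Rightarrow> (nat \<Rightarrow> 'a) measure" where
  "glued_law N k W = distr (PiM {..<N} (\<lambda>_. W)) path_space
     (\<lambda>\<omega> n. \<omega> (blk k N n) (n - k (blk k N n)))"

end

theory Submission
  imports Defs
begin

text \<open>
  Both laws are determined by their values on cylinders. For n \<ge> k (N - 1), the chain gives the
  cylinder fixing \<omega> 0, ..., \<omega> n the mass \<mu> (\<omega> 0) times the product of all transitions
  R (\<omega> t) (\<omega> (t + 1)), t < n, while the glued law gives it the product of the \<pi> (\<omega> (k j))
  times the transitions inside the blocks. Their ratio depends only on the path up to time
  k (N - 1), so it is a density of the chain's law with respect to the glued law. It is
  bounded by c^(-N) as soon as \<pi> \<ge> c everywhere, and irreducibility yields such a c > 0 for all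
  stationary \<pi> at once: some \<pi> x is at least 1 / card F, and \<pi> y \<ge> \<pi> x * R^m x y.
\<close>

section \<open>Stochastic matrices and stationary distributions\<close>

lemma stochastic_nonneg: "stochastic R \<Longrightarrow> 0 \<le> R x y"
  by (simp add: stochastic_def)

lemma stochastic_le_one:
  assumes "stochastic R"
  shows "R x y \<le> 1"
proof -
  have "R x y \<le> (\<Sum>y'\<in>UNIV. R x y')"
    by (rule member_le_sum) (auto simp: stochastic_nonneg[OF assms])
  then show ?thesis
    using assms by (simp add: stochastic_def)
qed

lemma prob_dist_nonneg: "prob_dist \<mu> \<Longrightarrow> 0 \<le> \<mu> x"
  by (simp add: prob_dist_def)

lemma prob_dist_le_one:
  assumes "prob_dist \<mu>"
  shows "\<mu> x \<le> 1"
proof -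
  have "\<mu> x \<le> (\<Sum>y\<in>UNIV. \<mu> y)"
    by (rule member_le_sum) (auto simp: prob_dist_nonneg[OF assms])
  then show ?thesis
    using assms by (simp add: prob_dist_def)
qed

lemma prob_dist_obtains_ge_inverse_card:
  fixes \<mu> :: "'a::finite \<Rightarrow> real"
  assumes "prob_dist \<mu>"
  obtains x where "1 / real CARD('a) \<le> \<mu> x"
proof (rule ccontr)
  assume "\<not> thesis"
  then have "\<And>x. \<mu> x < 1 / real CARD('a)"
    using that by (meson not_le)
  then have "(\<Sum>x\<in>UNIV. \<mu> x) < (\<Sum>x\<in>(UNIV::'a set). 1 / real CARD('a))"
    by (intro sum_strict_mono) auto
  then show False
    using assms by (simp add: prob_dist_def)
qed

lemma mpow_nonneg: "stochastic R \<Longrightarrow> 0 \<le> mpow R n x y"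
  by (induction n arbitrary: y) (auto simp: stochastic_nonneg intro!: sum_nonneg)

lemma stationary_dist_mpow:
  assumes "stationary_dist R \<pi>"
  shows "(\<Sum>x\<in>UNIV. \<pi> x * mpow R n x y) = \<pi> y"
proof (induction n arbitrary: y)
  case 0
  have "(\<Sum>x\<in>UNIV. \<pi> x * mpow R 0 x y) = (\<Sum>x\<in>UNIV. if x = y then \<pi> x else 0)"
    by (intro sum.cong) auto
  then show ?case
    by simp
next
  case (Suc n)
  have "(\<Sum>x\<in>UNIV. \<pi> x * mpow R (Suc n) x y) = (\<Sum>x\<in>UNIV. \<Sum>z\<in>UNIV. \<pi> x * mpow R n x z * R z y)"
    by (simp add: sum_distrib_left mult.assoc)
  also have "\<dots> = (\<Sum>z\<in>UNIV. (\<Sum>x\<in>UNIV. \<pi> x * mpow R n x z) * R z y)"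
    by (subst sum.swap) (simp add: sum_distrib_right)
  also have "\<dots> = (\<Sum>z\<in>UNIV. \<pi> z * R z y)"
    using Suc by simp
  also have "\<dots> = \<pi> y"
    using assms by (simp add: stationary_dist_def)
  finally show ?case .
qed

lemma stationary_dist_ge_mpow:
  assumes "stochastic R" "stationary_dist R \<pi>"
  shows "\<pi> x * mpow R n x y \<le> \<pi> y"
proof -
  have "\<pi> x * mpow R n x y \<le> (\<Sum>x'\<in>UNIV. \<pi> x' * mpow R n x' y)"
    using assms by (intro member_le_sum)
      (auto simp: stationary_dist_def prob_dist_nonneg mpow_nonneg)
  also have "\<dots> = \<pi> y"
    by (rule stationary_dist_mpow[OF assms(2)])
  finally show ?thesis .
qed

lemma irreducible_stationary_dist_lower_bound:
  fixes R :: "'a::finite \<Rightarrow> 'a \<Rightarrow> real"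
  assumes "stochastic R" "irreducible_mc R"
  obtains c where "c > 0" "\<And>\<pi> y. stationary_dist R \<pi> \<Longrightarrow> c \<le> \<pi> y"
proof -
  obtain n where n: "\<And>x y. mpow R (n x y) x y > 0"
    using assms(2) unfolding irreducible_mc_def by metis
  define m where "m = Min (range (\<lambda>(x, y). mpow R (n x y) x y))"
  have m_pos: "m > 0"
    unfolding m_def by (subst Min_gr_iff) (auto simp: n)
  have "m / real CARD('a) \<le> \<pi> y" if \<pi>: "stationary_dist R \<pi>" for \<pi> y
  proof -
    obtain x where x: "1 / real CARD('a) \<le> \<pi> x"
      using \<pi> prob_dist_obtains_ge_inverse_card unfolding stationary_dist_def by blast
    have "m \<le> mpow R (n x y) x y"
      unfolding m_def by (rule Min_le) auto
    then have "1 / real CARD('a) * m \<le> \<pi> x * mpow R (n x y) x y"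
      using x m_pos \<pi> by (intro mult_mono) (auto simp: stationary_dist_def prob_dist_nonneg)
    also have "\<dots> \<le> \<pi> y"
      by (rule stationary_dist_ge_mpow[OF assms(1) \<pi>])
    finally show ?thesis
      by simp
  qed
  with m_pos show ?thesis
    using that[of "m / real CARD('a)"] by simp
qed

section \<open>Cylinder sets of path space\<close>

definition cylinder :: "nat \<Rightarrow> (nat \<Rightarrow> 'a) \<Rightarrow> (nat \<Rightarrow> 'a) set" where
  "cylinder n x = {\<omega>. \<forall>i\<le>n. \<omega> i = x i}"

lemma space_path_space [simp]: "space path_space = UNIV"
  by (simp add: path_space_def space_PiM)

lemma measurable_path_space_component [measurable]:
  "(\<lambda>\<omega>. \<omega> i) \<in> measurable path_space (count_space UNIV)"
  unfolding path_space_def by measurable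

lemma cylinder_in_path_space [measurable]: "cylinder n x \<in> sets path_space"
proof -
  have "cylinder n x = (\<Inter>i\<in>{..n}. (\<lambda>\<omega>. \<omega> i) -` {x i} \<inter> space path_space)"
    by (auto simp: cylinder_def)
  also have "\<dots> \<in> sets path_space"
    by (intro sets.finite_INT measurable_sets[OF measurable_path_space_component]) auto
  finally show ?thesis .
qed

lemma sets_glued_law [measurable_cong]: "sets (glued_law N k W) = sets path_space"
  by (simp add: glued_law_def)

lemma markov_law_emeasure_cylinder:
  assumes "markov_law R \<mu> P"
  shows "emeasure P (cylinder n x) = ennreal (\<mu> (x 0) * (\<Prod>i<n. R (x i) (x (Suc i))))"
proof -
  interpret prob_space P
    using assms by (simp add: markov_law_def)
  define xs where "xs = map x [0..<Suc n]"
  have nth_xs: "i \<le> n \<Longrightarrow> xs ! i = x i" for i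
    by (simp add: xs_def less_Suc_eq_le del: upt_Suc)
  have "measure P {\<omega>. \<forall>i\<le>n. \<omega> i = xs ! i} = \<mu> (xs ! 0) * (\<Prod>i<n. R (xs ! i) (xs ! Suc i))"
    using assms unfolding markov_law_def by (simp add: xs_def)
  moreover have "{\<omega>. \<forall>i\<le>n. \<omega> i = xs ! i} = cylinder n x"
    by (auto simp: cylinder_def nth_xs)
  moreover have "(\<Prod>i<n. R (xs ! i) (xs ! Suc i)) = (\<Prod>i<n. R (x i) (x (Suc i)))"
    by (intro prod.cong) (auto simp: nth_xs)
  ultimately show ?thesis
    by (simp add: emeasure_eq_measure nth_xs)
qed

lemma markov_law_emeasure_shifted_cylinder:
  assumes "markov_law R \<mu> P"
  shows "emeasure P (cylinder m (\<lambda>s. x (a + s))) =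
    ennreal (\<mu> (x a) * (\<Prod>t\<in>{a..<a + m}. R (x t) (x (Suc t))))"
proof -
  have "(\<Prod>s<m. R (x (a + s)) (x (a + Suc s))) = (\<Prod>t\<in>{a..<a + m}. R (x t) (x (Suc t)))"
    by (rule prod.reindex_bij_witness[where i = "\<lambda>t. t - a" and j = "\<lambda>s. a + s"]) auto
  then show ?thesis
    by (simp add: markov_law_emeasure_cylinder[OF assms])
qed

lemma path_space_measure_eqI_cylinder:
  fixes P M :: "(nat \<Rightarrow> 'a::finite) measure"
  assumes sets_P: "sets P = sets path_space" and sets_M: "sets M = sets path_space"
    and "finite_measure P"
    and eq: "\<And>n x. n\<^sub>0 \<le> n \<Longrightarrow> emeasure P (cylinder n x) = emeasure M (cylinder n x)"
  shows "P = M"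
proof (rule measure_eqI_PiM_infinite[where I = UNIV and M = "\<lambda>_. count_space UNIV"])
  show "sets P = sets (PiM UNIV (\<lambda>_. count_space UNIV))" "sets M = sets (PiM UNIV (\<lambda>_. count_space UNIV))"
    using sets_P sets_M by (simp_all add: path_space_def)
next
  fix J :: "nat set" and A :: "nat \<Rightarrow> 'a set"
  assume "finite J"
  define n where "n = n\<^sub>0 + Max (insert 0 J)"
  have "n\<^sub>0 \<le> n"
    by (simp add: n_def)
  have J_le: "i \<le> n" if "i \<in> J" for i
  proof -
    have "i \<le> Max (insert 0 J)"
      using \<open>finite J\<close> that by (intro Max_ge) auto
    then show ?thesis
      by (simp add: n_def)
  qed
  define X where "X = {x \<in> PiE {..n} (\<lambda>_. UNIV). \<forall>i\<in>J. x i \<in> A i}"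
  have "finite (PiE {..n} (\<lambda>_. UNIV :: 'a set))"
    by (rule finite_PiE) auto
  then have "finite X"
    by (rule rev_finite_subset) (auto simp: X_def)
  have decomp: "prod_emb UNIV (\<lambda>_. count_space UNIV) J (PiE J A) = (\<Union>x\<in>X. cylinder n x)"
  proof (intro equalityI subsetI)
    fix \<omega> assume "\<omega> \<in> prod_emb UNIV (\<lambda>_. count_space UNIV) J (PiE J A)"
    then have "restrict \<omega> {..n} \<in> X" and "\<omega> \<in> cylinder n (restrict \<omega> {..n})"
      using J_le by (auto simp: prod_emb_iff PiE_iff X_def cylinder_def)
    then show "\<omega> \<in> (\<Union>x\<in>X. cylinder n x)"
      by blast
  next
    fix \<omega> assume "\<omega> \<in> (\<Union>x\<in>X. cylinder n x)"
    then obtain x where "x \<in> X" "\<omega> \<in> cylinder n x"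
      by blast
    then have "\<forall>i\<in>J. \<omega> i \<in> A i"
      using J_le by (auto simp: X_def cylinder_def)
    then show "\<omega> \<in> prod_emb UNIV (\<lambda>_. count_space UNIV) J (PiE J A)"
      by (auto simp: prod_emb_iff PiE_iff)
  qed
  have disj: "disjoint_family_on (cylinder n) X"
    unfolding disjoint_family_on_def
  proof (intro ballI impI)
    fix x y assume "x \<in> X" "y \<in> X" "x \<noteq> y"
    then obtain i where i: "x i \<noteq> y i"
      by (auto simp: fun_eq_iff)
    moreover have "i \<le> n"
    proof (rule ccontr)
      assume "\<not> i \<le> n"
      then have "x i = undefined" "y i = undefined"
        using \<open>x \<in> X\<close> \<open>y \<in> X\<close> by (auto simp: X_def PiE_def extensional_def)
      with i show False
        by simp
    qed
    ultimately show "cylinder n x \<inter> cylinder n y = {}"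
      by (auto simp: cylinder_def)
  qed
  have cylinders_P: "cylinder n ` X \<subseteq> sets P" and cylinders_M: "cylinder n ` X \<subseteq> sets M"
    unfolding sets_P sets_M by (simp_all add: image_subset_iff cylinder_in_path_space)
  have "emeasure P (\<Union>x\<in>X. cylinder n x) = (\<Sum>x\<in>X. emeasure P (cylinder n x))"
    by (rule sum_emeasure[OF cylinders_P disj \<open>finite X\<close>, symmetric])
  also have "\<dots> = (\<Sum>x\<in>X. emeasure M (cylinder n x))"
    using eq[OF \<open>n\<^sub>0 \<le> n\<close>] by simp
  also have "\<dots> = emeasure M (\<Union>x\<in>X. cylinder n x)"
    by (rule sum_emeasure[OF cylinders_M disj \<open>finite X\<close>])
  finally show "emeasure P (prod_emb UNIV (\<lambda>_. count_space UNIV) J (PiE J A)) =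
      emeasure M (prod_emb UNIV (\<lambda>_. count_space UNIV) J (PiE J A))"
    unfolding decomp .
qed fact

lemma emeasure_density_const_on:
  assumes "G \<in> borel_measurable M" "A \<in> sets M" "\<And>\<omega>. \<omega> \<in> A \<Longrightarrow> G \<omega> = c"
  shows "emeasure (density M G) A = c * emeasure M A"
proof -
  have "emeasure (density M G) A = (\<integral>\<^sup>+\<omega>. G \<omega> * indicator A \<omega> \<partial>M)"
    by (rule emeasure_density[OF assms(1,2)])
  also have "\<dots> = (\<integral>\<^sup>+\<omega>. c * indicator A \<omega> \<partial>M)"
    using assms(3) by (intro nn_integral_cong) (simp split: split_indicator)
  also have "\<dots> = c * emeasure M A"
    by (rule nn_integral_cmult_indicator[OF assms(2)])
  finally show ?thesis .
qed

lemma nn_integral_density_le_cmult: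
  assumes "G \<in> borel_measurable M" "f \<in> borel_measurable M" "\<And>x. G x \<le> C"
  shows "(\<integral>\<^sup>+x. f x \<partial>density M G) \<le> C * (\<integral>\<^sup>+x. f x \<partial>M)"
proof -
  have "(\<integral>\<^sup>+x. f x \<partial>density M G) = (\<integral>\<^sup>+x. G x * f x \<partial>M)"
    by (rule nn_integral_density[OF assms(1,2)])
  also have "\<dots> \<le> (\<integral>\<^sup>+x. C * f x \<partial>M)"
    using assms(3) by (intro nn_integral_mono mult_right_mono) auto
  also have "\<dots> = C * (\<integral>\<^sup>+x. f x \<partial>M)"
    by (rule nn_integral_cmult[OF assms(2)])
  finally show ?thesis .
qed

section \<open>Block decomposition of time\<close>

locale block_times =
  fixes N :: nat and k :: "nat \<Rightarrow> nat"
  assumes N_pos: "N \<ge> 1" and k_0: "k 0 = 0" and k_strict_mono: "strict_mono_on {..<N} k"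
begin

lemma k_less: "i < j \<Longrightarrow> j < N \<Longrightarrow> k i < k j"
  using k_strict_mono by (auto simp: strict_mono_on_def)

lemma k_le: "i \<le> j \<Longrightarrow> j < N \<Longrightarrow> k i \<le> k j"
  using k_less by (cases "i = j") (auto simp: order_le_less)

lemma finite_blocks_started: "finite {i. i < N \<and> k i \<le> t}"
  and blocks_started_nonempty: "{i. i < N \<and> k i \<le> t} \<noteq> {}"
  using N_pos k_0 by (auto intro!: exI[of _ 0])

lemma blk_less: "blk k N t < N"
  and k_blk_le: "k (blk k N t) \<le> t"
  using Max_in[OF finite_blocks_started blocks_started_nonempty, of t] by (auto simp: blk_def)

lemma less_k_Suc_blk: "Suc (blk k N t) < N \<Longrightarrow> t < k (Suc (blk k N t))"
  using Max_ge[OF finite_blocks_started, of "Suc (blk k N t)" t]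
  by (force simp: blk_def[symmetric])

lemma blk_eq_iff:
  assumes "j < N"
  shows "blk k N t = j \<longleftrightarrow> k j \<le> t \<and> (Suc j < N \<longrightarrow> t < k (Suc j))"
proof
  assume "k j \<le> t \<and> (Suc j < N \<longrightarrow> t < k (Suc j))"
  then have "i \<le> j" if "i < N" "k i \<le> t" for i
    using that k_le[of "Suc j" i] by (cases "i \<le> j") auto
  then show "blk k N t = j"
    unfolding blk_def using assms \<open>k j \<le> t \<and> _\<close> by (intro Max_eqI) auto
qed (use k_blk_le less_k_Suc_blk in blast)

text \<open>The last time of block j that is at most n (the subtraction does not truncate: k (Suc j) > k j).\<close>
definition block_last :: "nat \<Rightarrow> nat \<Rightarrow> nat" where
  "block_last n j = (if Suc j < N then k (Suc j) - 1 else n)"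

context
  fixes n assumes k_last_le: "k (N - 1) \<le> n"
begin

lemma k_le_n:
  assumes "j < N"
  shows "k j \<le> n"
proof -
  have "k j \<le> k (N - 1)"
    using assms by (intro k_le) auto
  with k_last_le show ?thesis
    by simp
qed

lemma k_le_block_last: "j < N \<Longrightarrow> k j \<le> block_last n j"
  using k_less[of j "Suc j"] k_le_n by (auto simp: block_last_def)

lemma block_last_le: "j < N \<Longrightarrow> block_last n j \<le> n"
  using k_le_n[of "Suc j"] by (auto simp: block_last_def)

lemma blk_eq_iff_block: "j < N \<Longrightarrow> t \<le> n \<and> blk k N t = j \<longleftrightarrow> t \<in> {k j..block_last n j}"
  using k_le_n[of "Suc j"] k_less[of j "Suc j"] by (auto simp: blk_eq_iff block_last_def)

lemma disjoint_block_transitions: "disjoint_family_on (\<lambda>j. {k j..<block_last n j}) {..<N}"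
proof -
  have "{k i..<block_last n i} \<inter> {k j..<block_last n j} = {}" if "i < j" "j < N" for i j
    using that k_less[of i "Suc i"] k_le[of "Suc i" j] by (auto simp: block_last_def)
  then show ?thesis
    unfolding disjoint_family_on_def by (metis Int_commute lessThan_iff linorder_neqE_nat)
qed

lemma block_transitions_eq:
  "(\<Union>j<N. {k j..<block_last n j}) = {t. t < n \<and> Suc t \<notin> k ` {..<N}}"
proof safe
  fix t j i assume "j < N" "t \<in> {k j..<block_last n j}" "i < N" "Suc t = k i"
  then show False
    using k_le[of i j] k_le[of "Suc j" i] by (cases "i \<le> j") (auto simp: block_last_def)
next
  fix t assume t: "t < n" "Suc t \<notin> k ` {..<N}"
  have "Suc t \<noteq> k (Suc (blk k N t))" if "Suc (blk k N t) < N"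
    using t(2) that by blast
  then have "t < block_last n (blk k N t)"
    using t(1) less_k_Suc_blk[of t] by (auto simp: block_last_def)
  then show "t \<in> (\<Union>j<N. {k j..<block_last n j})"
    using blk_less k_blk_le by auto
qed (use block_last_le in force)

end

definition glue :: "(nat \<Rightarrow> nat \<Rightarrow> 'a) \<Rightarrow> nat \<Rightarrow> 'a" where
  "glue \<omega> t = \<omega> (blk k N t) (t - k (blk k N t))"

lemma glued_law_eq_distr: "glued_law N k W = distr (PiM {..<N} (\<lambda>_. W)) path_space glue"
  by (simp add: glued_law_def glue_def[abs_def])

lemma measurable_glue:
  assumes "sets W = sets path_space"
  shows "glue \<in> measurable (PiM {..<N} (\<lambda>_. W)) path_space"
  unfolding path_space_def glue_def
proof (rule measurable_PiM_single')
  fix t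
  have "(\<lambda>w. w (t - k (blk k N t))) \<in> measurable W (count_space UNIV)"
    using measurable_path_space_component measurable_cong_sets[OF assms refl] by blast
  then show "(\<lambda>\<omega>. \<omega> (blk k N t) (t - k (blk k N t))) \<in> measurable (PiM {..<N} (\<lambda>_. W)) (count_space UNIV)"
    using measurable_compose[OF measurable_component_singleton] blk_less by (simp add: lessThan_iff)
qed simp

lemma glue_vimage_cylinder:
  assumes "k (N - 1) \<le> n"
  shows "glue -` cylinder n x \<inter> (PiE {..<N} (\<lambda>_. UNIV)) =
    PiE {..<N} (\<lambda>j. cylinder (block_last n j - k j) (\<lambda>s. x (k j + s)))"
proof (intro equalityI subsetI)
  fix \<omega> assume \<omega>: "\<omega> \<in> glue -` cylinder n x \<inter> (PiE {..<N} (\<lambda>_. UNIV))"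
  have "\<omega> j s = x (k j + s)" if "j < N" "s \<le> block_last n j - k j" for j s
    using \<omega> blk_eq_iff_block[OF assms that(1), of "k j + s"] k_le_block_last[OF assms that(1)] that(2)
    by (auto simp: glue_def cylinder_def)
  then show "\<omega> \<in> PiE {..<N} (\<lambda>j. cylinder (block_last n j - k j) (\<lambda>s. x (k j + s)))"
    using \<omega> by (auto simp: cylinder_def PiE_def)
next
  fix \<omega> assume \<omega>: "\<omega> \<in> PiE {..<N} (\<lambda>j. cylinder (block_last n j - k j) (\<lambda>s. x (k j + s)))"
  have "glue \<omega> t = x t" if "t \<le> n" for t
  proof -
    define j where "j = blk k N t"
    have "j < N"
      using blk_less by (simp add: j_def)
    then have "t \<in> {k j..block_last n j}"
      using blk_eq_iff_block[OF assms, of j t] that by (simp add: j_def)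
    moreover have "\<omega> j \<in> cylinder (block_last n j - k j) (\<lambda>s. x (k j + s))"
      using \<omega> \<open>j < N\<close> by blast
    ultimately show ?thesis
      by (auto simp: glue_def cylinder_def j_def[symmetric])
  qed
  then show "\<omega> \<in> glue -` cylinder n x \<inter> (PiE {..<N} (\<lambda>_. UNIV))"
    using \<omega> by (auto simp: cylinder_def PiE_def)
qed

lemma emeasure_glued_law_cylinder:
  assumes W: "markov_law R \<pi> W" and "stochastic R" "prob_dist \<pi>" "k (N - 1) \<le> n"
  shows "emeasure (glued_law N k W) (cylinder n x) =
    ennreal ((\<Prod>j<N. \<pi> (x (k j))) * (\<Prod>t | t < n \<and> Suc t \<notin> k ` {..<N}. R (x t) (x (Suc t))))"
proof -
  have sets_W: "sets W = sets path_space" and "prob_space W"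
    using W by (auto simp: markov_law_def)
  interpret product_prob_space "\<lambda>_::nat. W"
    by (rule product_prob_spaceI) fact
  have space_W: "space W = UNIV"
    using sets_eq_imp_space_eq[OF sets_W] by simp
  have nonneg: "0 \<le> \<pi> (x (k j)) * (\<Prod>t\<in>{k j..<block_last n j}. R (x t) (x (Suc t)))" for j
    using assms by (intro mult_nonneg_nonneg prod_nonneg) (auto simp: stochastic_nonneg prob_dist_nonneg)
  have vimage: "glue -` cylinder n x \<inter> space (PiM {..<N} (\<lambda>_. W)) =
      PiE {..<N} (\<lambda>j. cylinder (block_last n j - k j) (\<lambda>s. x (k j + s)))"
    unfolding space_PiM space_W by (rule glue_vimage_cylinder[OF assms(4)])
  have "emeasure (glued_law N k W) (cylinder n x) =
      emeasure (PiM {..<N} (\<lambda>_. W)) (PiE {..<N} (\<lambda>j. cylinder (block_last n j - k j) (\<lambda>s. x (k j + s))))"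
    unfolding vimage[symmetric]
    by (simp add: glued_law_eq_distr emeasure_distr measurable_glue[OF sets_W] cylinder_in_path_space)
  also have "\<dots> = (\<Prod>j<N. emeasure W (cylinder (block_last n j - k j) (\<lambda>s. x (k j + s))))"
    by (rule emeasure_PiM) (auto simp: sets_W)
  also have "\<dots> = (\<Prod>j<N. ennreal (\<pi> (x (k j)) * (\<Prod>t\<in>{k j..<block_last n j}. R (x t) (x (Suc t)))))"
    using k_le_block_last[OF assms(4)] by (intro prod.cong) (simp_all add: markov_law_emeasure_shifted_cylinder[OF W])
  also have "\<dots> = ennreal ((\<Prod>j<N. \<pi> (x (k j))) * (\<Prod>j<N. \<Prod>t\<in>{k j..<block_last n j}. R (x t) (x (Suc t))))"
    using nonneg by (simp add: prod_ennreal prod.distrib)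
  also have "(\<Prod>j<N. \<Prod>t\<in>{k j..<block_last n j}. R (x t) (x (Suc t))) =
      (\<Prod>t | t < n \<and> Suc t \<notin> k ` {..<N}. R (x t) (x (Suc t)))"
    using disjoint_block_transitions[OF assms(4)]
    by (simp add: block_transitions_eq[OF assms(4), symmetric] prod.UNION_disjoint disjoint_family_on_def)
  finally show ?thesis .
qed

section \<open>The glued law dominates the chain\<close>

definition glued_density :: "('a::finite \<Rightarrow> 'a \<Rightarrow> real) \<Rightarrow> ('a \<Rightarrow> real) \<Rightarrow> ('a \<Rightarrow> real) \<Rightarrow> (nat \<Rightarrow> 'a) \<Rightarrow> real"
  where "glued_density R \<mu> \<pi> \<omega> =
    \<mu> (\<omega> 0) * (\<Prod>t | Suc t \<in> k ` {..<N}. R (\<omega> t) (\<omega> (Suc t))) / (\<Prod>j<N. \<pi> (\<omega> (k j)))"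

lemma measurable_glued_density [measurable]:
  "(\<lambda>\<omega>. ennreal (glued_density R \<mu> \<pi> \<omega>)) \<in> borel_measurable path_space"
  unfolding path_space_def glued_density_def by measurable

lemma glued_density_nonneg:
  assumes "stochastic R" "prob_dist \<mu>" "prob_dist \<pi>"
  shows "0 \<le> glued_density R \<mu> \<pi> \<omega>"
  using assms unfolding glued_density_def
  by (intro divide_nonneg_nonneg mult_nonneg_nonneg prod_nonneg)
    (auto simp: stochastic_nonneg prob_dist_nonneg)

lemma glued_density_cylinder:
  assumes "k (N - 1) \<le> n" "\<omega> \<in> cylinder n x"
  shows "glued_density R \<mu> \<pi> \<omega> = glued_density R \<mu> \<pi> x"
proof -
  have eq: "\<omega> t = x t" if "t \<le> n" for t
    using assms(2) that by (simp add: cylinder_def)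
  have "(\<Prod>t | Suc t \<in> k ` {..<N}. R (\<omega> t) (\<omega> (Suc t))) =
      (\<Prod>t | Suc t \<in> k ` {..<N}. R (x t) (x (Suc t)))"
  proof (rule prod.cong)
    fix t assume "t \<in> {t. Suc t \<in> k ` {..<N}}"
    then have "Suc t \<le> n"
      using k_le_n[OF assms(1)] by auto
    then show "R (\<omega> t) (\<omega> (Suc t)) = R (x t) (x (Suc t))"
      by (simp add: eq)
  qed simp
  moreover have "(\<Prod>j<N. \<pi> (\<omega> (k j))) = (\<Prod>j<N. \<pi> (x (k j)))"
    using k_le_n[OF assms(1)] by (intro prod.cong) (simp_all add: eq)
  ultimately show ?thesis
    by (simp add: glued_density_def eq)
qed

lemma markov_law_cylinder_eq_glued_density:
  assumes P: "markov_law R \<mu> P" and W: "markov_law R \<pi> W" and "k (N - 1) \<le> n"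
    and "stochastic R" "prob_dist \<mu>" "prob_dist \<pi>" "\<And>x. 0 < \<pi> x"
  shows "emeasure P (cylinder n x) = ennreal (glued_density R \<mu> \<pi> x) * emeasure (glued_law N k W) (cylinder n x)"
proof -
  define T where "T = {t. Suc t \<in> k ` {..<N}}"
  define U where "U = {t. t < n \<and> Suc t \<notin> k ` {..<N}}"
  define starts where "starts = (\<Prod>j<N. \<pi> (x (k j)))"
  have "starts > 0"
    unfolding starts_def using assms(7) by (intro prod_pos) auto
  have "T \<subseteq> {..<n}"
    using k_le_n[OF assms(3)] by (force simp: T_def)
  then have "{..<n} = T \<union> U" "T \<inter> U = {}" "finite T" "finite U"
    by (auto simp: T_def U_def intro: finite_subset)
  then have "\<mu> (x 0) * (\<Prod>t<n. R (x t) (x (Suc t))) =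
      \<mu> (x 0) * ((\<Prod>t\<in>T. R (x t) (x (Suc t))) * (\<Prod>t\<in>U. R (x t) (x (Suc t))))"
    by (simp add: prod.union_disjoint)
  also have "\<dots> = glued_density R \<mu> \<pi> x * (starts * (\<Prod>t\<in>U. R (x t) (x (Suc t))))"
    using \<open>starts > 0\<close> by (simp add: glued_density_def T_def[symmetric] starts_def[symmetric])
  finally show ?thesis
    using assms(4-6) glued_density_nonneg[OF assms(4-6)]
    by (simp add: markov_law_emeasure_cylinder[OF P] emeasure_glued_law_cylinder[OF W assms(4,6,3)]
        U_def starts_def ennreal_mult prod_nonneg stochastic_nonneg prob_dist_nonneg)
qed

lemma markov_law_eq_density_glued_law:
  assumes P: "markov_law R \<mu> P" and W: "markov_law R \<pi> W"
    and "stochastic R" "prob_dist \<mu>" "prob_dist \<pi>" "\<And>x. 0 < \<pi> x"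
  shows "P = density (glued_law N k W) (\<lambda>\<omega>. ennreal (glued_density R \<mu> \<pi> \<omega>))"
proof (rule path_space_measure_eqI_cylinder[where n\<^sub>0 = "k (N - 1)"])
  show "sets P = sets path_space" "finite_measure P"
    using P by (auto simp: markov_law_def prob_space_def)
  show "sets (density (glued_law N k W) (\<lambda>\<omega>. ennreal (glued_density R \<mu> \<pi> \<omega>))) = sets path_space"
    by (simp add: sets_glued_law)
  fix n x assume n: "k (N - 1) \<le> n"
  have "emeasure (density (glued_law N k W) (\<lambda>\<omega>. ennreal (glued_density R \<mu> \<pi> \<omega>))) (cylinder n x) =
      ennreal (glued_density R \<mu> \<pi> x) * emeasure (glued_law N k W) (cylinder n x)"
  proof (rule emeasure_density_const_on)
    show "(\<lambda>\<omega>. ennreal (glued_density R \<mu> \<pi> \<omega>)) \<in> borel_measurable (glued_law N k W)"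
      by measurable
    show "cylinder n x \<in> sets (glued_law N k W)"
      by (simp add: sets_glued_law cylinder_in_path_space)
  qed (simp add: glued_density_cylinder[OF n])
  then show "emeasure P (cylinder n x) =
      emeasure (density (glued_law N k W) (\<lambda>\<omega>. ennreal (glued_density R \<mu> \<pi> \<omega>))) (cylinder n x)"
    using markov_law_cylinder_eq_glued_density[OF P W n assms(3-6)] by simp
qed

lemma glued_density_le:
  assumes "stochastic R" "prob_dist \<mu>" "c > 0" "\<And>x. c \<le> \<pi> x"
  shows "glued_density R \<mu> \<pi> \<omega> \<le> 1 / c ^ N"
proof -
  have "c ^ N \<le> (\<Prod>j<N. \<pi> (\<omega> (k j)))"
    using prod_mono[of "{..<N}" "\<lambda>_. c"] assms(3,4) by (simp add: less_imp_le)
  moreover have "\<mu> (\<omega> 0) * (\<Prod>t | Suc t \<in> k ` {..<N}. R (\<omega> t) (\<omega> (Suc t))) \<le> 1"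
    using assms(1,2) by (intro mult_le_one prod_le_1 prod_nonneg)
      (auto simp: prob_dist_le_one prob_dist_nonneg stochastic_le_one stochastic_nonneg)
  ultimately show ?thesis
    using assms(1-3) unfolding glued_density_def
    by (intro frac_le) (auto intro!: mult_nonneg_nonneg prod_nonneg simp: prob_dist_nonneg stochastic_nonneg)
qed

end

theorem lemma5p1:
  fixes R :: "'a::finite \<Rightarrow> 'a \<Rightarrow> real" and N :: nat
  assumes "stochastic R" and "irreducible_mc R" and "N \<ge> 1"
  shows "\<exists>\<rho>::real. \<forall>\<mu> P \<pi> W (k::nat \<Rightarrow> nat) (\<Lambda>::(nat \<Rightarrow> 'a) \<Rightarrow> real).
     prob_dist \<mu> \<and> markov_law R \<mu> P \<and>
     stationary_dist R \<pi> \<and> markov_law R \<pi> W \<and>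
     k 0 = 0 \<and> strict_mono_on {..<N} k \<and>
     \<Lambda> \<in> borel_measurable path_space \<and> (\<forall>\<omega>. 0 \<le> \<Lambda> \<omega>)
     \<longrightarrow> (\<integral>\<^sup>+\<omega>. ennreal (\<Lambda> \<omega>) \<partial>P) \<le> ennreal \<rho> * (\<integral>\<^sup>+\<omega>. ennreal (\<Lambda> \<omega>) \<partial>glued_law N k W)"
proof -
  obtain c where "c > 0" and c: "\<And>\<pi> y. stationary_dist R \<pi> \<Longrightarrow> c \<le> \<pi> y"
    using irreducible_stationary_dist_lower_bound[OF assms(1,2)] by blast
  show ?thesis
  proof (intro exI allI impI, elim conjE)
    fix \<mu> P \<pi> W and k :: "nat \<Rightarrow> nat" and \<Lambda> :: "(nat \<Rightarrow> 'a) \<Rightarrow> real"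
    assume "prob_dist \<mu>" "markov_law R \<mu> P" "stationary_dist R \<pi>" "markov_law R \<pi> W"
      "k 0 = 0" "strict_mono_on {..<N} k" "\<Lambda> \<in> borel_measurable path_space"
    interpret block_times N k
      using assms(3) \<open>k 0 = 0\<close> \<open>strict_mono_on {..<N} k\<close> by unfold_locales
    have "c \<le> \<pi> x" "0 < \<pi> x" for x
      using c[OF \<open>stationary_dist R \<pi>\<close>] \<open>c > 0\<close> by (auto intro: less_le_trans)
    then have density: "P = density (glued_law N k W) (\<lambda>\<omega>. ennreal (glued_density R \<mu> \<pi> \<omega>))"
      using \<open>stationary_dist R \<pi>\<close> unfolding stationary_dist_def
      by (intro markov_law_eq_density_glued_law) (auto simp: assms(1) \<open>prob_dist \<mu>\<close> \<open>markov_law R \<mu> P\<close> \<open>markov_law R \<pi> W\<close>)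
    show "(\<integral>\<^sup>+\<omega>. ennreal (\<Lambda> \<omega>) \<partial>P) \<le> ennreal (1 / c ^ N) * (\<integral>\<^sup>+\<omega>. ennreal (\<Lambda> \<omega>) \<partial>glued_law N k W)"
      unfolding density
      using \<open>c > 0\<close> \<open>\<And>x. c \<le> \<pi> x\<close> assms(1) \<open>prob_dist \<mu>\<close> \<open>\<Lambda> \<in> borel_measurable path_space\<close>
      by (intro nn_integral_density_le_cmult ennreal_leI glued_density_le) auto
  qed
qed

end
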